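(* Let $\Gamma$ be a group. Then for every $j \ge 1$ the nilpotent quotients $P\mathcal{N}i(\Gamma)/\overline{C^j}(P\mathcal{N}i(\Gamma))$ and $\Gamma/C^j(\Gamma)$ are isomorphic, and the topology of $P\mathcal{N}i(\Gamma)$ can be defined by a metric.
   Context: For a group $\Gamma$, let $\mathcal{N}i$ be the family of all normal subgroups $N$ of $\Gamma$ with $\Gamma/N$ nilpotent (a directed family). Let $\mathcal{C}=\bigcap_{N\in\mathcal{N}i}N$; the group $\Gamma/\mathcal{C}$ carries the Hausdorff group topology for which the images of the members of $\mathcal{N}i$ form a basis of neighbourhoods of the identity, and its completion (with respect to the left uniformity) is the true pronilpotent completion $P\mathcal{N}i(\Gamma)$, identifiable with the inverse limit $\varprojlim_{N\in\mathcal{N}i}\Gamma/N$. The lower central series is $C^1(\Gamma)=\Gamma$, $C^{j+1}(\Gamma)=[\Gamma,C^j(\Gamma)]$. For a topological group $G$, $\overline{C^1}(G)=G$ and $\overline{C^{j+1}}(G)$ is the closure of the subgroup generated by commutators $[g,c]$ with $g\in G$, $c\in\overline{C^j}(G)$. *)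

theory Defs
  imports "HOL-Analysis.Analysis" "HOL-Algebra.Algebra"
begin

definition commutator :: "('a, 'b) monoid_scheme \<Rightarrow> 'a \<Rightarrow> 'a \<Rightarrow> 'a" where
  "commutator G x y = x \<otimes>\<^bsub>G\<^esub> y \<otimes>\<^bsub>G\<^esub> inv\<^bsub>G\<^esub> x \<otimes>\<^bsub>G\<^esub> inv\<^bsub>G\<^esub> y"

definition commutators :: "('a, 'b) monoid_scheme \<Rightarrow> 'a set \<Rightarrow> 'a set \<Rightarrow> 'a set" where
  "commutators G A B = {commutator G g c | g c. g \<in> A \<and> c \<in> B}"

text \<open>Lower central series, indexed from 1: C^1 = G, C^(j+1) = [G, C^j].
  (Index 0 is a dummy convention, also = G.)\<close>
fun lower_central :: "('a, 'b) monoid_scheme \<Rightarrow> nat \<Rightarrow> 'a set" where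
  "lower_central G 0 = carrier G"
| "lower_central G (Suc 0) = carrier G"
| "lower_central G (Suc (Suc n)) =
     generate G (commutators G (carrier G) (lower_central G (Suc n)))"

fun closed_lower_central ::
  "('a, 'b) monoid_scheme \<Rightarrow> 'a topology \<Rightarrow> nat \<Rightarrow> 'a set" where
  "closed_lower_central G T 0 = carrier G"
| "closed_lower_central G T (Suc 0) = carrier G"
| "closed_lower_central G T (Suc (Suc n)) =
     T closure_of (generate G (commutators G (carrier G) (closed_lower_central G T (Suc n))))"

definition nilpotent_group :: "('a, 'b) monoid_scheme \<Rightarrow> bool" where
  "nilpotent_group G \<longleftrightarrow> group G \<and> (\<exists>n. lower_central G n = {\<one>\<^bsub>G\<^esub>})"

definition Ni :: "('a, 'b) monoid_scheme \<Rightarrow> 'a set set" where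
  "Ni G = {N. N \<lhd> G \<and> nilpotent_group (G Mod N)}"

text \<open>The pronilpotent completion, realised as the inverse limit of the G/N, N in Ni:
  compatible families of cosets (the projection G/M \<rightarrow> G/N for M \<subseteq> N sends
  a coset of M to the unique coset of N containing it), with pointwise multiplication.\<close>
definition PNi :: "('a, 'b) monoid_scheme \<Rightarrow> ('a set \<Rightarrow> 'a set) monoid" where
  "PNi G = \<lparr> carrier = {x \<in> (\<Pi>\<^sub>E N\<in>Ni G. rcosets\<^bsub>G\<^esub> N).
                         \<forall>M\<in>Ni G. \<forall>N\<in>Ni G. M \<subseteq> N \<longrightarrow> x M \<subseteq> x N},
             mult = (\<lambda>x y. \<lambda>N\<in>Ni G. x N <#>\<^bsub>G\<^esub> y N),
             one = (\<lambda>N\<in>Ni G. N) \<rparr>"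

definition PNi_topology :: "('a, 'b) monoid_scheme \<Rightarrow> ('a set \<Rightarrow> 'a set) topology" where
  "PNi_topology G = subtopology
     (product_topology (\<lambda>N. discrete_topology (rcosets\<^bsub>G\<^esub> N)) (Ni G))
     (carrier (PNi G))"

end

theory Submission
  imports Defs
begin

text \<open>Every \<open>N \<in> Ni G\<close> contains a term \<open>C^c(G)\<close> of the lower central series, and every
  \<open>C^c(G)\<close> lies in \<open>Ni G\<close>. Hence a point of the completion is determined by its cosets modulo
  the \<open>C^c(G)\<close>, so the completion embeds into the countable product of the discrete groups
  \<open>G/C^c(G)\<close> and is metrizable.

  Let \<open>K\<^sub>j\<close> be the kernel of the projection of the completion onto \<open>G/C^j(G)\<close>. This projection
  is continuous into a discrete group, so it maps the closed lower central series into the lower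
  central series of \<open>G/C^j(G)\<close>, whose \<open>j\<close>-th term is trivial: the closed \<open>C^j\<close> lies in
  \<open>K\<^sub>j\<close>. Conversely, the image of \<open>C^j(G)\<close> lies in the closed \<open>C^j\<close> and is dense in
  \<open>K\<^sub>j\<close>. So the closed \<open>C^j\<close> equals \<open>K\<^sub>j\<close>, and the first isomorphism theorem applies.\<close>

(* HOL-Algebra's closure_of (closure under an equivalence) makes every topological
   closure_of ambiguous. *)
no_notation eq_closure_of (\<open>closure'_of\<index>\<close>)

section \<open>Commutators and the lower central series\<close>

lemma (in group) commutator_closed [simp]:
  "x \<in> carrier G \<Longrightarrow> y \<in> carrier G \<Longrightarrow> commutator G x y \<in> carrier G"
  by (simp add: commutator_def)

lemma (in group) commutators_subset_carrier:
  "A \<subseteq> carrier G \<Longrightarrow> B \<subseteq> carrier G \<Longrightarrow> commutators G A B \<subseteq> carrier G"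
  unfolding commutators_def by (auto intro!: commutator_closed)

lemma commutators_mono:
  "A \<subseteq> A' \<Longrightarrow> B \<subseteq> B' \<Longrightarrow> commutators G A B \<subseteq> commutators G A' B'"
  unfolding commutators_def by blast

lemma (in group) commutator_conjugate:
  assumes "g \<in> carrier G" "a \<in> carrier G" "c \<in> carrier G"
  shows "g \<otimes> commutator G a c \<otimes> inv g = commutator G (g \<otimes> a \<otimes> inv g) (g \<otimes> c \<otimes> inv g)"
proof -
  have cancel: "inv g \<otimes> (g \<otimes> y) = y" if "y \<in> carrier G" for y
    using assms(1) that by (simp flip: m_assoc)
  show ?thesis
    using assms by (simp add: commutator_def m_assoc inv_mult_group cancel)
qed

lemma (in group) commutators_normal_subset:
  assumes "N \<lhd> G"
  shows "commutators G (carrier G) N \<subseteq> N"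
proof
  interpret N: normal N G by fact
  fix z assume "z \<in> commutators G (carrier G) N"
  then obtain a c where a: "a \<in> carrier G" and c: "c \<in> N" and z: "z = commutator G a c"
    by (auto simp: commutators_def)
  have "z = (a \<otimes> c \<otimes> inv a) \<otimes> inv c"
    using a c N.subset by (auto simp: z commutator_def)
  then show "z \<in> N"
    using N.inv_op_closed2[OF a c] c by simp
qed

lemma (in group_hom) commutator_image:
  "x \<in> carrier G \<Longrightarrow> y \<in> carrier G \<Longrightarrow> h (commutator G x y) = commutator H (h x) (h y)"
  by (simp add: commutator_def)

lemma (in group_hom) generate_commutators_image:
  assumes "A \<subseteq> carrier G" "B \<subseteq> carrier G"
  shows "h ` generate G (commutators G A B) = generate H (commutators H (h ` A) (h ` B))"
proof -
  have "h ` commutators G A B = commutators H (h ` A) (h ` B)"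
    using assms unfolding commutators_def by (force simp: commutator_image)
  then show ?thesis
    using generate_img[OF G.commutators_subset_carrier[OF assms]] by simp
qed

lemma lower_central_induct [case_names 0 1 Suc_Suc]:
  assumes "P 0" "P (Suc 0)" "\<And>n. P (Suc n) \<Longrightarrow> P (Suc (Suc n))"
  shows "P n"
  using assms by (rule lower_central.induct[of "\<lambda>_. P"])

context group
begin

lemma normal_generate_commutators:
  assumes "N \<lhd> G"
  shows "generate G (commutators G (carrier G) N) \<lhd> G"
proof -
  interpret N: normal N G by fact
  show ?thesis
  proof (rule normal_generateI)
    show "commutators G (carrier G) N \<subseteq> carrier G"
      by (simp add: N.subset commutators_subset_carrier)
  next
    fix z g assume "z \<in> commutators G (carrier G) N" and g: "g \<in> carrier G"
    then obtain a c where a: "a \<in> carrier G" and c: "c \<in> N" and z: "z = commutator G a c"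
      by (auto simp: commutators_def)
    have "g \<otimes> z \<otimes> inv g = commutator G (g \<otimes> a \<otimes> inv g) (g \<otimes> c \<otimes> inv g)"
      using g a c N.subset by (simp add: z commutator_conjugate)
    moreover have "g \<otimes> c \<otimes> inv g \<in> N"
      using N.inv_op_closed2[OF g c] .
    ultimately show "g \<otimes> z \<otimes> inv g \<in> commutators G (carrier G) N"
      using g a unfolding commutators_def by blast
  qed
qed

lemma lower_central_normal: "lower_central G n \<lhd> G"
  by (induction n rule: lower_central_induct) (simp_all add: normal_self normal_generate_commutators)

lemma lower_central_subset_carrier: "lower_central G n \<subseteq> carrier G"
  using lower_central_normal normal_imp_subgroup subgroup.subset by blast

lemma lower_central_Suc_subset: "lower_central G (Suc n) \<subseteq> lower_central G n"
proof (cases n)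
  case (Suc k)
  have "commutators G (carrier G) (lower_central G (Suc k)) \<subseteq> lower_central G (Suc k)"
    by (rule commutators_normal_subset[OF lower_central_normal])
  then show ?thesis
    using Suc generate_subgroup_incl normal_imp_subgroup[OF lower_central_normal] by simp
qed simp

lemma lower_central_antimono: "m \<le> n \<Longrightarrow> lower_central G n \<subseteq> lower_central G m"
  by (induction n rule: dec_induct) (use lower_central_Suc_subset in blast)+

end

lemma (in group_hom) lower_central_image:
  assumes "h ` carrier G = carrier H"
  shows "h ` lower_central G n = lower_central H n"
  by (induction n rule: lower_central_induct)
    (simp_all add: assms generate_commutators_image G.lower_central_subset_carrier)

context group
begin

lemma lower_central_FactGroup:
  assumes "N \<lhd> G"
  shows "lower_central (G Mod N) n = (\<lambda>a. N #> a) ` lower_central G n"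
proof -
  interpret quotient: group_hom G "G Mod N" "\<lambda>a. N #> a"
    using assms by (simp add: group_hom_def group_hom_axioms_def is_group
        normal.factorgroup_is_group normal.r_coset_hom_Mod)
  show ?thesis
    using quotient.lower_central_image[OF carrier_FactGroup[symmetric]] by simp
qed

lemma lower_central_FactGroup_self:
  "lower_central (G Mod lower_central G n) n = {\<one>\<^bsub>G Mod lower_central G n\<^esub>}"
proof -
  have "subgroup (lower_central G n) G"
    by (rule normal_imp_subgroup[OF lower_central_normal])
  then have "lower_central G n #> a = lower_central G n" if "a \<in> lower_central G n" for a
    using that coset_join2 subgroup.subset by blast
  moreover have "\<one> \<in> lower_central G n"
    using \<open>subgroup (lower_central G n) G\<close> subgroup.one_closed by blast
  ultimately show ?thesis
    by (auto simp: lower_central_FactGroup[OF lower_central_normal])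
qed

end

section \<open>The pronilpotent completion as a group\<close>

context group
begin

lemma Ni_normal: "N \<in> Ni G \<Longrightarrow> N \<lhd> G"
  by (simp add: Ni_def)

lemma Ni_subgroup: "N \<in> Ni G \<Longrightarrow> subgroup N G"
  by (simp add: Ni_normal normal_imp_subgroup)

lemma lower_central_in_Ni: "lower_central G n \<in> Ni G"
  unfolding Ni_def nilpotent_group_def
  using lower_central_normal normal.factorgroup_is_group lower_central_FactGroup_self by blast

lemma Ni_lower_central_subset:
  assumes "N \<in> Ni G"
  obtains c where "lower_central G c \<subseteq> N"
proof -
  have N: "N \<lhd> G" and "nilpotent_group (G Mod N)"
    using assms by (auto simp: Ni_def)
  then obtain c where c: "lower_central (G Mod N) c = {N}"
    unfolding nilpotent_group_def by auto
  have "x \<in> N" if x: "x \<in> lower_central G c" for x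
  proof -
    have "N #> x = N"
      using c x by (auto simp: lower_central_FactGroup[OF N])
    then show ?thesis
      using rcos_self[OF _ normal_imp_subgroup[OF N]] x lower_central_subset_carrier by auto
  qed
  then show thesis
    using that by blast
qed

lemma Ni_finite_lower_central_subset:
  assumes "finite F" "F \<subseteq> Ni G"
  shows "\<exists>m\<ge>j. \<forall>N\<in>F. lower_central G m \<subseteq> N"
  using assms
proof (induction F rule: finite_induct)
  case (insert N F)
  then obtain m where m: "m \<ge> j" "\<forall>M\<in>F. lower_central G m \<subseteq> M"
    by auto
  obtain c where c: "lower_central G c \<subseteq> N"
    using Ni_lower_central_subset insert.prems by blast
  have "\<forall>M\<in>insert N F. lower_central G (max m c) \<subseteq> M"
    using m(2) c lower_central_antimono[of m "max m c"] lower_central_antimono[of c "max m c"]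
    by auto
  then show ?case
    using m(1) by (intro exI[of _ "max m c"]) auto
qed blast

lemma carrier_PNi:
  "carrier (PNi G) = {x \<in> (\<Pi>\<^sub>E N\<in>Ni G. rcosets N). \<forall>M\<in>Ni G. \<forall>N\<in>Ni G. M \<subseteq> N \<longrightarrow> x M \<subseteq> x N}"
  by (simp add: PNi_def)

lemma mult_PNi: "x \<otimes>\<^bsub>PNi G\<^esub> y = (\<lambda>N\<in>Ni G. x N <#> y N)"
  by (simp add: PNi_def)

lemma one_PNi: "\<one>\<^bsub>PNi G\<^esub> = (\<lambda>N\<in>Ni G. N)"
  by (simp add: PNi_def)

lemma PNi_rcosets: "x \<in> carrier (PNi G) \<Longrightarrow> N \<in> Ni G \<Longrightarrow> x N \<in> rcosets N"
  by (auto simp: carrier_PNi)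

lemma PNi_coset_rep:
  assumes "x \<in> carrier (PNi G)" "N \<in> Ni G"
  obtains g where "g \<in> carrier G" "x N = N #> g"
  using PNi_rcosets[OF assms] by (auto simp: RCOSETS_def)

lemma PNi_compatible:
  "x \<in> carrier (PNi G) \<Longrightarrow> M \<in> Ni G \<Longrightarrow> N \<in> Ni G \<Longrightarrow> M \<subseteq> N \<Longrightarrow> x M \<subseteq> x N"
  by (auto simp: carrier_PNi)

lemma PNi_undefined: "x \<in> carrier (PNi G) \<Longrightarrow> N \<notin> Ni G \<Longrightarrow> x N = undefined"
  by (auto simp: carrier_PNi PiE_def extensional_def)

lemma PNi_coset_of_subset:
  assumes x: "x \<in> carrier (PNi G)" and M: "M \<in> Ni G" and N: "N \<in> Ni G" and "M \<subseteq> N"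
    and g: "g \<in> carrier G" and xM: "x M = M #> g"
  shows "x N = N #> g"
proof -
  have "g \<in> x N"
    using rcos_self[OF g Ni_subgroup[OF M]] xM PNi_compatible[OF x M N \<open>M \<subseteq> N\<close>] by auto
  moreover obtain h where "h \<in> carrier G" "x N = N #> h"
    using PNi_coset_rep[OF x N] .
  ultimately show ?thesis
    using repr_independence Ni_subgroup[OF N] by simp
qed

text \<open>The lower central terms are cofinal in \<open>Ni G\<close>, so they separate the points of the limit.\<close>
lemma PNi_eqI:
  assumes x: "x \<in> carrier (PNi G)" and y: "y \<in> carrier (PNi G)"
    and xy: "\<And>m. x (lower_central G m) = y (lower_central G m)"
  shows "x = y"
proof
  fix N
  show "x N = y N"
  proof (cases "N \<in> Ni G")
    case True
    obtain c where c: "lower_central G c \<subseteq> N"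
      using Ni_lower_central_subset[OF True] .
    obtain g where g: "g \<in> carrier G" "x (lower_central G c) = lower_central G c #> g"
      using PNi_coset_rep[OF x lower_central_in_Ni] .
    show ?thesis
      using PNi_coset_of_subset[OF x lower_central_in_Ni True c g]
        PNi_coset_of_subset[OF y lower_central_in_Ni True c g(1)] g(2) xy by simp
  qed (simp add: PNi_undefined x y)
qed

lemma PNi_mult_closed:
  assumes x: "x \<in> carrier (PNi G)" and y: "y \<in> carrier (PNi G)"
  shows "x \<otimes>\<^bsub>PNi G\<^esub> y \<in> carrier (PNi G)"
  unfolding mult_PNi carrier_PNi
proof (intro CollectI conjI ballI impI)
  show "(\<lambda>N\<in>Ni G. x N <#> y N) \<in> (\<Pi>\<^sub>E N\<in>Ni G. rcosets N)"
    using normal.setmult_closed[OF Ni_normal PNi_rcosets[OF x] PNi_rcosets[OF y]] by simp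
  fix M N assume MN: "M \<in> Ni G" "N \<in> Ni G" "M \<subseteq> N"
  show "(\<lambda>N\<in>Ni G. x N <#> y N) M \<subseteq> (\<lambda>N\<in>Ni G. x N <#> y N) N"
    using PNi_compatible[OF x MN] PNi_compatible[OF y MN] MN unfolding set_mult_def by auto
qed

lemma PNi_one_closed: "\<one>\<^bsub>PNi G\<^esub> \<in> carrier (PNi G)"
  unfolding one_PNi carrier_PNi
  using Ni_subgroup subgroup.subgroup_in_rcosets is_group by auto

lemma PNi_inv_exists:
  assumes x: "x \<in> carrier (PNi G)"
  shows "\<exists>y\<in>carrier (PNi G). y \<otimes>\<^bsub>PNi G\<^esub> x = \<one>\<^bsub>PNi G\<^esub>"
proof
  define y where "y = (\<lambda>N\<in>Ni G. set_inv (x N))"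
  have y_coset: "y N = N #> inv g" if "N \<in> Ni G" "g \<in> carrier G" "x N = N #> g" for N g
    using that normal.rcos_inv[OF Ni_normal] by (simp add: y_def)
  show "y \<in> carrier (PNi G)"
    unfolding carrier_PNi
  proof (intro CollectI conjI ballI impI)
    show "y \<in> (\<Pi>\<^sub>E N\<in>Ni G. rcosets N)"
      unfolding y_def using normal.setinv_closed[OF Ni_normal PNi_rcosets[OF x]] by simp
    fix M N assume MN: "M \<in> Ni G" "N \<in> Ni G" "M \<subseteq> N"
    obtain g where g: "g \<in> carrier G" "x M = M #> g"
      using PNi_coset_rep[OF x MN(1)] .
    have "x N = N #> g"
      using PNi_coset_of_subset[OF x MN g] .
    then show "y M \<subseteq> y N"
      using y_coset[OF MN(1) g] y_coset[OF MN(2) g(1)] MN(3) by (auto simp: r_coset_def)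
  qed
  have "set_inv (x N) <#> x N = N" if "N \<in> Ni G" for N
    using normal.rcosets_inv_mult_group_eq[OF Ni_normal PNi_rcosets[OF x]] that by blast
  then show "y \<otimes>\<^bsub>PNi G\<^esub> x = \<one>\<^bsub>PNi G\<^esub>"
    unfolding mult_PNi one_PNi y_def by (intro ext) simp
qed

lemma group_PNi: "group (PNi G)"
proof (rule groupI)
  fix x y z
  assume x: "x \<in> carrier (PNi G)" and y: "y \<in> carrier (PNi G)" and z: "z \<in> carrier (PNi G)"
  have in_carrier: "w N \<subseteq> carrier G" if "w \<in> carrier (PNi G)" "N \<in> Ni G" for w N
    using PNi_rcosets[OF that] Ni_subgroup[OF that(2)] subgroup.rcosets_carrier is_group by blast
  have "(x N <#> y N) <#> z N = x N <#> (y N <#> z N)" if "N \<in> Ni G" for N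
    using set_mult_assoc in_carrier[OF x that] in_carrier[OF y that] in_carrier[OF z that] by blast
  then show "x \<otimes>\<^bsub>PNi G\<^esub> y \<otimes>\<^bsub>PNi G\<^esub> z = x \<otimes>\<^bsub>PNi G\<^esub> (y \<otimes>\<^bsub>PNi G\<^esub> z)"
    unfolding mult_PNi by (intro ext) simp
next
  fix x assume x: "x \<in> carrier (PNi G)"
  have "N <#> x N = x N" if "N \<in> Ni G" for N
    using normal.rcosets_mult_eq[OF Ni_normal PNi_rcosets[OF x]] that by blast
  then show "\<one>\<^bsub>PNi G\<^esub> \<otimes>\<^bsub>PNi G\<^esub> x = x"
    unfolding mult_PNi one_PNi by (intro ext) (simp add: PNi_undefined[OF x])
qed (simp_all add: PNi_mult_closed PNi_one_closed PNi_inv_exists)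

end

definition to_PNi :: "('a, 'b) monoid_scheme \<Rightarrow> 'a \<Rightarrow> 'a set \<Rightarrow> 'a set" where
  "to_PNi G g = (\<lambda>N\<in>Ni G. N #>\<^bsub>G\<^esub> g)"

context group
begin

lemma to_PNi_carrier:
  assumes "g \<in> carrier G"
  shows "to_PNi G g \<in> carrier (PNi G)"
proof -
  have "N #> g \<in> rcosets N" if "N \<in> Ni G" for N
    using rcosetsI[OF subgroup.subset[OF Ni_subgroup[OF that]] assms] .
  then show ?thesis
    unfolding to_PNi_def carrier_PNi by (auto simp: r_coset_def)
qed

lemma to_PNi_hom: "group_hom G (PNi G) (to_PNi G)"
proof -
  have "to_PNi G (g \<otimes> h) = to_PNi G g \<otimes>\<^bsub>PNi G\<^esub> to_PNi G h"
    if "g \<in> carrier G" "h \<in> carrier G" for g h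
    using normal.rcos_sum[OF Ni_normal that] unfolding to_PNi_def mult_PNi by (intro ext) simp
  then show ?thesis
    by (simp add: group_hom_def group_hom_axioms_def is_group group_PNi hom_def to_PNi_carrier)
qed

lemma PNi_proj_hom:
  assumes "K \<in> Ni G"
  shows "group_hom (PNi G) (G Mod K) (\<lambda>x. x K)"
proof -
  have "(\<lambda>x. x K) \<in> hom (PNi G) (G Mod K)"
    using PNi_rcosets assms by (auto simp: hom_def FactGroup_def mult_PNi)
  then show ?thesis
    by (simp add: group_hom_def group_hom_axioms_def group_PNi normal.factorgroup_is_group
        Ni_normal assms)
qed

lemma PNi_proj_surj:
  assumes "K \<in> Ni G"
  shows "(\<lambda>x. x K) ` carrier (PNi G) = carrier (G Mod K)"
proof
  show "(\<lambda>x. x K) ` carrier (PNi G) \<subseteq> carrier (G Mod K)"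
    using PNi_rcosets assms by (force simp: FactGroup_def)
  show "carrier (G Mod K) \<subseteq> (\<lambda>x. x K) ` carrier (PNi G)"
  proof
    fix Y assume "Y \<in> carrier (G Mod K)"
    then obtain g where g: "g \<in> carrier G" "Y = K #> g"
      by (auto simp: carrier_FactGroup)
    then have "Y = to_PNi G g K"
      using assms by (simp add: to_PNi_def)
    then show "Y \<in> (\<lambda>x. x K) ` carrier (PNi G)"
      using to_PNi_carrier[OF g(1)] by blast
  qed
qed

end

section \<open>The closed lower central series of the completion\<close>

lemma closed_lower_central_subset_carrier:
  assumes "topspace T = carrier G"
  shows "closed_lower_central G T n \<subseteq> carrier G"
proof (induction n rule: lower_central_induct)
  case (Suc_Suc n)
  show ?case
    using closure_of_subset_topspace[of T] by (simp add: assms)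
qed simp_all

context group_hom
begin

lemma closure_image_lower_central_subset:
  assumes T: "topspace T = carrier H"
  shows "T closure_of (h ` lower_central G n) \<subseteq> closed_lower_central H T n"
proof (induction n rule: lower_central_induct)
  case (Suc_Suc n)
  have "h ` lower_central G (Suc n) \<subseteq> T closure_of (h ` lower_central G (Suc n))"
    using T G.lower_central_subset_carrier hom_closed by (intro closure_of_subset) blast
  then have "commutators H (h ` carrier G) (h ` lower_central G (Suc n))
      \<subseteq> commutators H (carrier H) (closed_lower_central H T (Suc n))"
    using Suc_Suc.IH by (intro commutators_mono) auto
  then have "h ` lower_central G (Suc (Suc n))
      \<subseteq> generate H (commutators H (carrier H) (closed_lower_central H T (Suc n)))"
    by (simp add: generate_commutators_image G.lower_central_subset_carrier H.mono_generate)
  then show ?case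
    by (simp add: closure_of_mono)
qed (use closure_of_subset_topspace[of T] in \<open>simp_all add: T\<close>)

text \<open>The preimage of any subgroup of the discrete group \<open>H\<close> is closed.\<close>
lemma image_closed_lower_central_subset:
  assumes T: "topspace T = carrier G"
    and cont: "continuous_map T (discrete_topology (carrier H)) h"
  shows "h ` closed_lower_central G T n \<subseteq> lower_central H n"
proof (induction n rule: lower_central_induct)
  case (Suc_Suc n)
  let ?C = "closed_lower_central G T (Suc n)"
  let ?S = "generate G (commutators G (carrier G) ?C)"
  let ?P = "{x \<in> topspace T. h x \<in> lower_central H (Suc (Suc n))}"
  have C: "?C \<subseteq> carrier G"
    by (rule closed_lower_central_subset_carrier[OF T])
  have "h ` ?S = generate H (commutators H (h ` carrier G) (h ` ?C))"
    by (rule generate_commutators_image[OF subset_refl C])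
  also have "\<dots> \<subseteq> lower_central H (Suc (Suc n))"
    unfolding lower_central.simps(3) using Suc_Suc.IH
    by (intro H.mono_generate commutators_mono) auto
  moreover have "?S \<subseteq> carrier G"
    using G.generate_in_carrier[OF G.commutators_subset_carrier[OF subset_refl C]] by blast
  ultimately have "?S \<subseteq> ?P"
    using T by blast
  moreover have "closedin (discrete_topology (carrier H)) (lower_central H (Suc (Suc n)))"
    using H.lower_central_subset_carrier by (simp only: closedin_discrete_topology)
  then have "closedin T ?P"
    by (rule closedin_continuous_map_preimage[OF cont])
  ultimately have "T closure_of ?S \<subseteq> ?P"
    by (rule closure_of_minimal)
  then show ?case
    by auto
qed (simp_all add: image_subset_iff)

end

context group
begin

lemma topspace_PNi_topology: "topspace (PNi_topology G) = carrier (PNi G)"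
  unfolding PNi_topology_def topspace_subtopology topspace_product_topology
  by (auto simp: carrier_PNi)

lemma continuous_map_PNi_proj:
  assumes "K \<in> Ni G"
  shows "continuous_map (PNi_topology G) (discrete_topology (rcosets K)) (\<lambda>x. x K)"
  unfolding PNi_topology_def
  using continuous_map_product_projection[OF assms, of "\<lambda>N. discrete_topology (rcosets N)"]
  by (simp add: continuous_map_from_subtopology)

lemma PNi_open_lower_central_nhd:
  assumes U: "openin (PNi_topology G) U" and "x \<in> U"
  obtains m where "m \<ge> j"
    "{y \<in> carrier (PNi G). y (lower_central G m) = x (lower_central G m)} \<subseteq> U"
proof -
  obtain V where V: "openin (product_topology (\<lambda>N. discrete_topology (rcosets N)) (Ni G)) V"
    and UV: "U = V \<inter> carrier (PNi G)"
    using U unfolding PNi_topology_def openin_subtopology by blast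
  have x: "x \<in> carrier (PNi G)" "x \<in> V"
    using \<open>x \<in> U\<close> UV by auto
  obtain W where Wfin: "finite {N \<in> Ni G. W N \<noteq> topspace (discrete_topology (rcosets N))}"
    and Wx: "x \<in> Pi\<^sub>E (Ni G) W" and WV: "Pi\<^sub>E (Ni G) W \<subseteq> V"
    using bspec[OF V[unfolded openin_product_topology_alt] x(2)] by blast
  define F where "F = {N \<in> Ni G. W N \<noteq> rcosets N}"
  have "finite F" "F \<subseteq> Ni G"
    using Wfin by (simp_all add: F_def)
  then obtain m where m: "m \<ge> j" "\<forall>N\<in>F. lower_central G m \<subseteq> N"
    using Ni_finite_lower_central_subset by blast
  have in_W: "y \<in> Pi\<^sub>E (Ni G) W"
    if y: "y \<in> carrier (PNi G)" "y (lower_central G m) = x (lower_central G m)" for y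
  proof (rule PiE_I)
    fix N assume N: "N \<in> Ni G"
    show "y N \<in> W N"
    proof (cases "N \<in> F")
      case True
      obtain g where g: "g \<in> carrier G" "x (lower_central G m) = lower_central G m #> g"
        using PNi_coset_rep[OF x(1) lower_central_in_Ni] .
      have sub: "lower_central G m \<subseteq> N"
        using m(2) True by blast
      have "x N = N #> g"
        using PNi_coset_of_subset[OF x(1) lower_central_in_Ni N sub g] .
      moreover have "y N = N #> g"
        using PNi_coset_of_subset[OF y(1) lower_central_in_Ni N sub g(1)] g(2) y(2) by simp
      ultimately show ?thesis
        using PiE_mem[OF Wx N] by simp
    next
      case False
      then have "W N = rcosets N"
        using N by (simp add: F_def)
      then show ?thesis
        using PNi_rcosets[OF y(1) N] by simp
    qed
  qed (rule PNi_undefined[OF y(1)])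
  have "y \<in> U" if "y \<in> carrier (PNi G)" "y (lower_central G m) = x (lower_central G m)" for y
    using subsetD[OF WV in_W[OF that]] that(1) UV by simp
  with m(1) show thesis
    by (intro that) auto
qed

lemma PNi_proj_kernel_subset_closure:
  "kernel (PNi G) (G Mod lower_central G j) (\<lambda>x. x (lower_central G j))
     \<subseteq> PNi_topology G closure_of (to_PNi G ` lower_central G j)"
proof
  fix x assume "x \<in> kernel (PNi G) (G Mod lower_central G j) (\<lambda>x. x (lower_central G j))"
  then have x: "x \<in> carrier (PNi G)" and xj: "x (lower_central G j) = lower_central G j"
    by (simp_all add: kernel_def)
  show "x \<in> PNi_topology G closure_of (to_PNi G ` lower_central G j)"
    unfolding in_closure_of
  proof (intro conjI allI impI)
    show "x \<in> topspace (PNi_topology G)"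
      using x topspace_PNi_topology by simp
    fix U assume "x \<in> U \<and> openin (PNi_topology G) U"
    then obtain m where "m \<ge> j"
      and mU: "{y \<in> carrier (PNi G). y (lower_central G m) = x (lower_central G m)} \<subseteq> U"
      using PNi_open_lower_central_nhd[of U x j] by blast
    obtain g where g: "g \<in> carrier G" "x (lower_central G m) = lower_central G m #> g"
      using PNi_coset_rep[OF x lower_central_in_Ni] .
    have "x (lower_central G j) = lower_central G j #> g"
      using PNi_coset_of_subset[OF x lower_central_in_Ni lower_central_in_Ni
          lower_central_antimono[OF \<open>m \<ge> j\<close>] g] .
    then have "lower_central G j #> g = lower_central G j"
      using xj by (rule trans[OF sym])
    then have "g \<in> lower_central G j"
      using rcos_self[OF g(1) Ni_subgroup[OF lower_central_in_Ni, of j]] by simp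
    moreover have "to_PNi G g \<in> U"
      using mU to_PNi_carrier[OF g(1)] g(2) lower_central_in_Ni by (auto simp: to_PNi_def)
    ultimately show "\<exists>y. y \<in> to_PNi G ` lower_central G j \<and> y \<in> U"
      by blast
  qed
qed

lemma closed_lower_central_PNi:
  "closed_lower_central (PNi G) (PNi_topology G) j
     = kernel (PNi G) (G Mod lower_central G j) (\<lambda>x. x (lower_central G j))"
proof
  let ?C = "lower_central G j"
  interpret proj: group_hom "PNi G" "G Mod ?C" "\<lambda>x. x ?C"
    by (rule PNi_proj_hom[OF lower_central_in_Ni])
  have "continuous_map (PNi_topology G) (discrete_topology (carrier (G Mod ?C))) (\<lambda>x. x ?C)"
    using continuous_map_PNi_proj[OF lower_central_in_Ni] by (simp add: FactGroup_def)
  then have "(\<lambda>x. x ?C) ` closed_lower_central (PNi G) (PNi_topology G) j \<subseteq> {?C}"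
    using proj.image_closed_lower_central_subset[OF topspace_PNi_topology _, of j]
      lower_central_FactGroup_self[of j] by simp
  then show "closed_lower_central (PNi G) (PNi_topology G) j
      \<subseteq> kernel (PNi G) (G Mod ?C) (\<lambda>x. x ?C)"
    using closed_lower_central_subset_carrier[OF topspace_PNi_topology]
    by (auto simp: kernel_def)
next
  interpret emb: group_hom G "PNi G" "to_PNi G"
    by (rule to_PNi_hom)
  show "kernel (PNi G) (G Mod lower_central G j) (\<lambda>x. x (lower_central G j))
      \<subseteq> closed_lower_central (PNi G) (PNi_topology G) j"
    using PNi_proj_kernel_subset_closure emb.closure_image_lower_central_subset[OF topspace_PNi_topology]
    by blast
qed

lemma PNi_Mod_closed_lower_central_iso:
  "PNi G Mod closed_lower_central (PNi G) (PNi_topology G) j \<cong> G Mod lower_central G j"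
  unfolding closed_lower_central_PNi
  by (rule group_hom.FactGroup_iso[OF PNi_proj_hom PNi_proj_surj]) (rule lower_central_in_Ni)+

end

section \<open>Metrizability\<close>

definition lower_central_coords :: "('a, 'b) monoid_scheme \<Rightarrow> ('a set \<Rightarrow> 'a set) \<Rightarrow> nat \<Rightarrow> 'a set"
  where "lower_central_coords G x m = x (lower_central G m)"

definition lower_central_tower :: "('a, 'b) monoid_scheme \<Rightarrow> (nat \<Rightarrow> 'a set) topology"
  where "lower_central_tower G =
    product_topology (\<lambda>m. discrete_topology (rcosets\<^bsub>G\<^esub> (lower_central G m))) UNIV"

lemma metrizable_space_lower_central_tower: "metrizable_space (lower_central_tower G)"
  unfolding lower_central_tower_def metrizable_space_product_topology
  by (meson countableI_type countable_subset subset_UNIV metrizable_space_discrete_topology)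

context group
begin

lemma continuous_map_lower_central_coords:
  "continuous_map (PNi_topology G) (lower_central_tower G) (lower_central_coords G)"
  unfolding lower_central_tower_def continuous_map_componentwise_UNIV lower_central_coords_def
  using continuous_map_PNi_proj[OF lower_central_in_Ni] by blast

lemma inj_on_lower_central_coords: "inj_on (lower_central_coords G) (carrier (PNi G))"
  by (intro inj_onI PNi_eqI) (auto simp: lower_central_coords_def fun_eq_iff)

lemma open_map_lower_central_coords:
  "open_map (PNi_topology G)
     (subtopology (lower_central_tower G) (lower_central_coords G ` carrier (PNi G)))
     (lower_central_coords G)"
  unfolding open_map_def
proof (intro allI impI)
  let ?f = "lower_central_coords G"
  let ?Z = "subtopology (lower_central_tower G) (?f ` carrier (PNi G))"
  fix U assume U: "openin (PNi_topology G) U"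
  show "openin ?Z (?f ` U)"
  proof (subst openin_subopen, intro ballI)
    fix z assume "z \<in> ?f ` U"
    then obtain x where x: "x \<in> U" "z = ?f x"
      by blast
    have xC: "x \<in> carrier (PNi G)"
      using openin_subset[OF U] x(1) topspace_PNi_topology by auto
    obtain m where m: "{y \<in> carrier (PNi G). y (lower_central G m) = x (lower_central G m)} \<subseteq> U"
      using PNi_open_lower_central_nhd[OF U x(1)] .
    define V where "V = {s \<in> topspace (lower_central_tower G). s m \<in> {x (lower_central G m)}}"
    have "continuous_map (lower_central_tower G)
        (discrete_topology (rcosets (lower_central G m))) (\<lambda>s. s m)"
      unfolding lower_central_tower_def by (rule continuous_map_product_projection) simp
    then have "openin (lower_central_tower G) V"
      unfolding V_def using PNi_rcosets[OF xC lower_central_in_Ni]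
      by (intro openin_continuous_map_preimage) auto
    then have "openin ?Z (V \<inter> ?f ` carrier (PNi G))"
      by (rule openin_subtopology_Int)
    moreover have "z \<in> V \<inter> ?f ` carrier (PNi G)"
      using x xC continuous_map_image_subset_topspace[OF continuous_map_lower_central_coords]
      by (auto simp: V_def topspace_PNi_topology lower_central_coords_def)
    moreover have "V \<inter> ?f ` carrier (PNi G) \<subseteq> ?f ` U"
      using m by (auto simp: V_def lower_central_coords_def)
    ultimately show "\<exists>T. openin ?Z T \<and> z \<in> T \<and> T \<subseteq> ?f ` U"
      by blast
  qed
qed

lemma embedding_map_lower_central_coords:
  "embedding_map (PNi_topology G) (lower_central_tower G) (lower_central_coords G)"
proof -
  have "embedding_map (PNi_topology G)
      (subtopology (lower_central_tower G) (lower_central_coords G ` carrier (PNi G)))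
      (lower_central_coords G)"
    using continuous_map_lower_central_coords open_map_lower_central_coords
      inj_on_lower_central_coords
    by (intro injective_open_imp_embedding_map)
      (simp_all add: continuous_map_in_subtopology topspace_PNi_topology)
  then show ?thesis
    by (simp add: embedding_map_in_subtopology)
qed

lemma metrizable_PNi_topology: "metrizable_space (PNi_topology G)"
  using homeomorphic_metrizable_space[OF
      embedding_map_imp_homeomorphic_space[OF embedding_map_lower_central_coords]]
    metrizable_space_subtopology[OF metrizable_space_lower_central_tower]
  by simp

end

theorem mainTheorem2:
  fixes \<Gamma> :: "('a, 'b) monoid_scheme"
  assumes "group \<Gamma>"
  shows "(\<forall>j\<ge>1. (PNi \<Gamma> Mod closed_lower_central (PNi \<Gamma>) (PNi_topology \<Gamma>) j)
                    \<cong> (\<Gamma> Mod lower_central \<Gamma> j))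
         \<and> metrizable_space (PNi_topology \<Gamma>)"
  using group.PNi_Mod_closed_lower_central_iso[OF assms] group.metrizable_PNi_topology[OF assms]
  by blast

end
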